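(* Assume $M$ is compact and $(t,x,y)\mapsto c_t(x,y)$ is continuous on $(0,\infty)\times M\times M$. Then for each $a>0$ the family $\{c_t\mid t\ge a\}$ is equicontinuous on $M\times M$. Moreover, there is a constant $h$ (independent of $a$) and, for each $a>0$, a constant $K$ such that $|c_t(x,y)-ht|\le K$ for all $t\ge a$ and all $x,y\in M$.
   Context: $c_t(x,y)$ is the optimal control cost $\inf\int_0^tL(x(s),u(s))ds$ for the control-affine system $\dot x=X_0(x)+\sum_iu_iX_i(x)$ on $M$ with smooth Lagrangian $L$, the infimum over admissible pairs with $x(0)=x$, $x(t)=y$. Equicontinuity is with respect to a fixed Riemannian distance $d$ on $M$. *)

theory Defs
  imports "HOL-Analysis.Analysis"
begin

text \<open>D vs is the iterated directional derivative of f
  along the directions in the list vs (the head of the list is the last derivative taken).\<close>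
definition C_inf_on :: "'a::euclidean_space set \<Rightarrow> ('a \<Rightarrow> 'b::euclidean_space) \<Rightarrow> bool" where
  "C_inf_on U f \<longleftrightarrow> open U \<and> (\<exists>D :: 'a list \<Rightarrow> 'a \<Rightarrow> 'b.
      (\<forall>x\<in>U. D [] x = f x) \<and>
      (\<forall>vs. continuous_on U (D vs)) \<and>
      (\<forall>vs v x. x \<in> U \<longrightarrow>
          ((\<lambda>s. D vs (x + s *\<^sub>R v)) has_vector_derivative D (v # vs) x) (at 0)))"

definition smooth_submanifold :: "'a::euclidean_space set \<Rightarrow> bool" where
  "smooth_submanifold M \<longleftrightarrow> (\<forall>p\<in>M. \<exists>U V S (\<phi>::'a\<Rightarrow>'a) (\<psi>::'a\<Rightarrow>'a).
      p \<in> U \<and> open U \<and> open V \<and> subspace S \<and>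
      C_inf_on U \<phi> \<and> C_inf_on V \<psi> \<and> \<phi> ` U = V \<and>
      (\<forall>x\<in>U. \<psi> (\<phi> x) = x) \<and> (\<forall>y\<in>V. \<phi> (\<psi> y) = y) \<and>
      \<phi> ` (M \<inter> U) = V \<inter> S)"

definition tangent_vector :: "'a::euclidean_space set \<Rightarrow> 'a \<Rightarrow> 'a \<Rightarrow> bool" where
  "tangent_vector M p v \<longleftrightarrow> (\<exists>\<gamma> e. e > 0 \<and> \<gamma> 0 = p \<and> (\<forall>s\<in>{-e<..<e}. \<gamma> s \<in> M) \<and>
      (\<gamma> has_vector_derivative v) (at 0))"

definition smooth_vector_field_on :: "'a::euclidean_space set \<Rightarrow> ('a \<Rightarrow> 'a) \<Rightarrow> bool" where
  "smooth_vector_field_on M Y \<longleftrightarrow> C_inf_on UNIV Y \<and> (\<forall>p\<in>M. tangent_vector M p (Y p))"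

text \<open>Admissible pairs (trajectory, control) on [0,t] from x to y for the control-affine
  system  x' = X0 x + sum_i u_i X_i x  on M (Caratheodory solutions, L^1 controls,
  integrable cost).\<close>
definition admissible ::
  "'a::euclidean_space set \<Rightarrow> ('a \<Rightarrow> 'a) \<Rightarrow> ('m::finite \<Rightarrow> 'a \<Rightarrow> 'a) \<Rightarrow> ('a \<times> (real^'m) \<Rightarrow> real)
   \<Rightarrow> real \<Rightarrow> 'a \<Rightarrow> 'a \<Rightarrow> (real \<Rightarrow> 'a) \<Rightarrow> (real \<Rightarrow> real^'m) \<Rightarrow> bool" where
  "admissible M X0 X L t x y \<gamma> u \<longleftrightarrow>
     u absolutely_integrable_on {0..t} \<and>
     (\<lambda>s. X0 (\<gamma> s) + (\<Sum>i\<in>UNIV. (u s $ i) *\<^sub>R X i (\<gamma> s))) absolutely_integrable_on {0..t} \<and>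
     (\<lambda>s. L (\<gamma> s, u s)) absolutely_integrable_on {0..t} \<and>
     (\<forall>s\<in>{0..t}. \<gamma> s \<in> M) \<and> \<gamma> 0 = x \<and> \<gamma> t = y \<and>
     (\<forall>s\<in>{0..t}. \<gamma> s = x + integral {0..s} (\<lambda>r. X0 (\<gamma> r) + (\<Sum>i\<in>UNIV. (u r $ i) *\<^sub>R X i (\<gamma> r))))"

text \<open>Optimal control cost c_t(x,y) (value +infinity if there is no admissible pair).\<close>
definition ctrl_cost ::
  "'a::euclidean_space set \<Rightarrow> ('a \<Rightarrow> 'a) \<Rightarrow> ('m::finite \<Rightarrow> 'a \<Rightarrow> 'a) \<Rightarrow> ('a \<times> (real^'m) \<Rightarrow> real)
   \<Rightarrow> real \<Rightarrow> 'a \<Rightarrow> 'a \<Rightarrow> ereal" where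
  "ctrl_cost M X0 X L t x y =
     (INF p \<in> {(\<gamma>, u). admissible M X0 X L t x y \<gamma> u}.
        ereal (integral {0..t} (\<lambda>s. L (fst p s, snd p s))))"

end

theory Submission
  imports Defs
begin

text \<open>
  The optimal cost satisfies the dynamic programming principle
  c_{t+s}(x,z) = inf_y (c_t(x,y) + c_s(y,z)): the triangle inequality comes from
  concatenating admissible pairs, the reverse approximate inequality from splitting a
  near-optimal pair at time t.
\<close>

section \<open>Integrals over concatenated and shifted intervals\<close>

lemma interval_shift:
  fixes f :: "real \<Rightarrow> 'b::euclidean_space"
  shows "(\<lambda>r. f (r + t)) absolutely_integrable_on {0..s} \<longleftrightarrow> f absolutely_integrable_on {t..t+s}"
    and "integral {0..s} (\<lambda>r. f (r + t)) = integral {t..t+s} f"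
proof -
  have shift: "(\<lambda>r. g (r + t)) = g \<circ> (+) t" for g :: "real \<Rightarrow> 'c"
    by (auto simp: add.commute)
  have "(\<lambda>r. f (r + t)) integrable_on {0..s} \<longleftrightarrow> f integrable_on {t..t+s}"
    using integrable_on_shift_Icc_real[of f t 0 s] shift[of f] by (simp add: add.commute)
  moreover have "(\<lambda>r. norm (f (r + t))) integrable_on {0..s}
      \<longleftrightarrow> (\<lambda>r. norm (f r)) integrable_on {t..t+s}"
    using integrable_on_shift_Icc_real[of "\<lambda>r. norm (f r)" t 0 s] shift[of "\<lambda>r. norm (f r)"]
    by (simp add: add.commute)
  ultimately show "(\<lambda>r. f (r + t)) absolutely_integrable_on {0..s} \<longleftrightarrow> f absolutely_integrable_on {t..t+s}"
    unfolding absolutely_integrable_on_def by simp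
  show "integral {0..s} (\<lambda>r. f (r + t)) = integral {t..t+s} f"
    unfolding shift[of f] integral_shift_Icc_real by (simp add: add.commute)
qed

lemma interval_split:
  fixes f :: "real \<Rightarrow> 'b::euclidean_space"
  assumes f: "f absolutely_integrable_on {0..t+s}" and "0 \<le> t" "0 \<le> s"
  shows "f absolutely_integrable_on {0..t}"
    and "(\<lambda>r. f (r + t)) absolutely_integrable_on {0..s}"
    and "integral {0..t+s} f = integral {0..t} f + integral {0..s} (\<lambda>r. f (r + t))"
proof -
  show "f absolutely_integrable_on {0..t}"
    using absolutely_integrable_on_subinterval[OF f] assms by auto
  have "f absolutely_integrable_on {t..t+s}"
    using absolutely_integrable_on_subinterval[OF f] assms by auto
  then show "(\<lambda>r. f (r + t)) absolutely_integrable_on {0..s}"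
    using interval_shift(1) by blast
  have "f integrable_on {0..t+s}"
    using f absolutely_integrable_on_def by blast
  then show "integral {0..t+s} f = integral {0..t} f + integral {0..s} (\<lambda>r. f (r + t))"
    using Henstock_Kurzweil_Integration.integral_combine[where a=0 and c=t and b="t+s" and f=f] assms interval_shift(2)[where f=f and t=t and s=s] by simp
qed

definition glue :: "real \<Rightarrow> (real \<Rightarrow> 'b) \<Rightarrow> (real \<Rightarrow> 'b) \<Rightarrow> real \<Rightarrow> 'b" where
  "glue t f g = (\<lambda>r. if r \<le> t then f r else g (r - t))"

lemma glue_integral:
  fixes f g :: "real \<Rightarrow> 'b::euclidean_space"
  assumes f: "f absolutely_integrable_on {0..t}" and g: "g absolutely_integrable_on {0..s}"
    and "0 \<le> t" "0 \<le> s"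
  shows "glue t f g absolutely_integrable_on {0..t+s}"
    and "integral {0..t+s} (glue t f g) = integral {0..t} f + integral {0..s} g"
proof -
  have g_shifted: "(\<lambda>r. g (r - t)) absolutely_integrable_on {t..t+s}"
    using g interval_shift(1)[where f="\<lambda>r. g (r - t)" and t=t and s=s] by simp
  have on_first: "glue t f g absolutely_integrable_on {0..t}"
    by (rule absolutely_integrable_spike[OF f negligible_empty]) (auto simp: glue_def)
  have on_second: "glue t f g absolutely_integrable_on {t..t+s}"
    by (rule absolutely_integrable_spike[OF g_shifted negligible_sing[of t]]) (auto simp: glue_def)
  have union: "{0..t} \<union> {t..t+s} = {0..t+s}"
    using assms by auto
  show glued: "glue t f g absolutely_integrable_on {0..t+s}"
    using absolutely_integrable_Un[OF on_first on_second] union by simp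
  have "integral {0..t} (glue t f g) = integral {0..t} f"
    by (rule integral_spike[OF negligible_empty]) (auto simp: glue_def)
  moreover have "integral {t..t+s} (glue t f g) = integral {t..t+s} (\<lambda>r. g (r - t))"
    by (rule integral_spike[OF negligible_sing[of t]]) (auto simp: glue_def)
  moreover have "integral {t..t+s} (\<lambda>r. g (r - t)) = integral {0..s} g"
    using interval_shift(2)[where f="\<lambda>r. g (r - t)" and t=t and s=s] by simp
  moreover have "glue t f g integrable_on {0..t+s}"
    using glued absolutely_integrable_on_def by blast
  ultimately show "integral {0..t+s} (glue t f g) = integral {0..t} f + integral {0..s} g"
    using Henstock_Kurzweil_Integration.integral_combine[where a=0 and c=t and b="t+s" and f="glue t f g"] assms by simp
qed

lemma glue_integral_equation:
  fixes F1 F2 :: "real \<Rightarrow> 'b::euclidean_space"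
  assumes F1: "F1 absolutely_integrable_on {0..t}" and F2: "F2 absolutely_integrable_on {0..s}"
    and t: "0 \<le> t"
    and eq1: "\<forall>r\<in>{0..t}. \<gamma>1 r = x + integral {0..r} F1"
    and eq2: "\<forall>r\<in>{0..s}. \<gamma>2 r = \<gamma>1 t + integral {0..r} F2"
    and r: "r \<in> {0..t+s}"
  shows "glue t \<gamma>1 \<gamma>2 r = x + integral {0..r} (glue t F1 F2)"
proof (cases "r \<le> t")
  case True
  have "integral {0..r} (glue t F1 F2) = integral {0..r} F1"
    by (rule integral_cong) (use True in \<open>auto simp: glue_def\<close>)
  then show ?thesis
    using eq1 True r by (simp add: glue_def)
next
  case False
  have rt: "r - t \<in> {0..s}"
    using False r by auto
  have "F2 absolutely_integrable_on {0..r-t}"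
    using absolutely_integrable_on_subinterval[OF F2] rt by auto
  from glue_integral(2)[OF F1 this t] False
  have "integral {0..r} (glue t F1 F2) = integral {0..t} F1 + integral {0..r-t} F2"
    by simp
  moreover have "glue t \<gamma>1 \<gamma>2 r = \<gamma>1 t + integral {0..r-t} F2"
    using eq2 False rt by (simp add: glue_def)
  moreover have "\<gamma>1 t = x + integral {0..t} F1"
    using eq1 t by auto
  ultimately show ?thesis
    by (simp add: algebra_simps)
qed


section \<open>Splitting and gluing admissible pairs\<close>

definition velocity ::
  "('a::euclidean_space \<Rightarrow> 'a) \<Rightarrow> ('m::finite \<Rightarrow> 'a \<Rightarrow> 'a) \<Rightarrow> (real \<Rightarrow> 'a) \<Rightarrow> (real \<Rightarrow> real^'m) \<Rightarrow> real \<Rightarrow> 'a"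
  where "velocity X0 X \<gamma> u = (\<lambda>s. X0 (\<gamma> s) + (\<Sum>i\<in>UNIV. (u s $ i) *\<^sub>R X i (\<gamma> s)))"

lemma admissible_iff:
  "admissible M X0 X L t x y \<gamma> u \<longleftrightarrow>
     u absolutely_integrable_on {0..t} \<and>
     velocity X0 X \<gamma> u absolutely_integrable_on {0..t} \<and>
     (\<lambda>s. L (\<gamma> s, u s)) absolutely_integrable_on {0..t} \<and>
     (\<forall>s\<in>{0..t}. \<gamma> s \<in> M) \<and> \<gamma> 0 = x \<and> \<gamma> t = y \<and>
     (\<forall>s\<in>{0..t}. \<gamma> s = x + integral {0..s} (velocity X0 X \<gamma> u))"
  unfolding admissible_def velocity_def by (rule refl)

lemma velocity_glue:
  "velocity X0 X (glue t \<gamma>1 \<gamma>2) (glue t u1 u2) = glue t (velocity X0 X \<gamma>1 u1) (velocity X0 X \<gamma>2 u2)"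
  unfolding velocity_def glue_def by (rule ext) simp

lemma admissible_split:
  assumes A: "admissible M X0 X L (t+s) x z \<gamma> u" and t: "0 \<le> t" and s: "0 \<le> s"
  shows "admissible M X0 X L t x (\<gamma> t) \<gamma> u"
    and "admissible M X0 X L s (\<gamma> t) z (\<lambda>r. \<gamma> (r + t)) (\<lambda>r. u (r + t))"
    and "integral {0..t+s} (\<lambda>r. L (\<gamma> r, u r)) = integral {0..t} (\<lambda>r. L (\<gamma> r, u r))
           + integral {0..s} (\<lambda>r. L (\<gamma> (r + t), u (r + t)))"
proof -
  define F where "F = velocity X0 X \<gamma> u"
  have uI: "u absolutely_integrable_on {0..t+s}"
    and FI: "F absolutely_integrable_on {0..t+s}"
    and LI: "(\<lambda>r. L (\<gamma> r, u r)) absolutely_integrable_on {0..t+s}"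
    and inM: "\<forall>r\<in>{0..t+s}. \<gamma> r \<in> M" and start: "\<gamma> 0 = x" and stop: "\<gamma> (t+s) = z"
    and eq: "\<forall>r\<in>{0..t+s}. \<gamma> r = x + integral {0..r} F"
    using A unfolding admissible_iff F_def by blast+
  note u_split = interval_split[OF uI t s]
    and F_split = interval_split[OF FI t s]
    and L_split = interval_split[OF LI t s]
  show "admissible M X0 X L t x (\<gamma> t) \<gamma> u"
    unfolding admissible_iff F_def[symmetric]
    using u_split(1) F_split(1) L_split(1) inM eq start s by auto
  have tail_eq: "\<gamma> (r + t) = \<gamma> t + integral {0..r} (\<lambda>q. F (q + t))" if r: "r \<in> {0..s}" for r
  proof -
    have "F absolutely_integrable_on {0..t+r}"
      using absolutely_integrable_on_subinterval[OF FI] r by auto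
    from interval_split(3)[OF this t] r
    have "integral {0..r+t} F = integral {0..t} F + integral {0..r} (\<lambda>q. F (q + t))"
      by (simp add: add.commute)
    moreover have "\<gamma> (r + t) = x + integral {0..r+t} F" "\<gamma> t = x + integral {0..t} F"
      using eq r t s by auto
    ultimately show ?thesis
      by simp
  qed
  have "velocity X0 X (\<lambda>r. \<gamma> (r + t)) (\<lambda>r. u (r + t)) = (\<lambda>r. F (r + t))"
    unfolding F_def velocity_def by (rule refl)
  moreover have "\<forall>r\<in>{0..s}. \<gamma> (r + t) \<in> M" "\<gamma> (s + t) = z"
    using inM stop t by (auto simp: add.commute)
  ultimately show "admissible M X0 X L s (\<gamma> t) z (\<lambda>r. \<gamma> (r + t)) (\<lambda>r. u (r + t))"
    unfolding admissible_iff using u_split(2) F_split(2) L_split(2) tail_eq by simp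
  show "integral {0..t+s} (\<lambda>r. L (\<gamma> r, u r)) = integral {0..t} (\<lambda>r. L (\<gamma> r, u r))
           + integral {0..s} (\<lambda>r. L (\<gamma> (r + t), u (r + t)))"
    using L_split(3) by simp
qed

lemma admissible_glue:
  assumes A1: "admissible M X0 X L t x y \<gamma>1 u1" and A2: "admissible M X0 X L s y z \<gamma>2 u2"
    and t: "0 \<le> t" and s: "0 \<le> s"
  shows "admissible M X0 X L (t+s) x z (glue t \<gamma>1 \<gamma>2) (glue t u1 u2)"
    and "integral {0..t+s} (\<lambda>r. L (glue t \<gamma>1 \<gamma>2 r, glue t u1 u2 r))
         = integral {0..t} (\<lambda>r. L (\<gamma>1 r, u1 r)) + integral {0..s} (\<lambda>r. L (\<gamma>2 r, u2 r))"
proof -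
  define F1 where "F1 = velocity X0 X \<gamma>1 u1"
  define F2 where "F2 = velocity X0 X \<gamma>2 u2"
  have cost_glue: "(\<lambda>r. L (glue t \<gamma>1 \<gamma>2 r, glue t u1 u2 r))
      = glue t (\<lambda>r. L (\<gamma>1 r, u1 r)) (\<lambda>r. L (\<gamma>2 r, u2 r))"
    by (rule ext) (simp add: glue_def)
  have u1I: "u1 absolutely_integrable_on {0..t}"
    and F1I: "F1 absolutely_integrable_on {0..t}"
    and L1I: "(\<lambda>r. L (\<gamma>1 r, u1 r)) absolutely_integrable_on {0..t}"
    and inM1: "\<forall>r\<in>{0..t}. \<gamma>1 r \<in> M" and start1: "\<gamma>1 0 = x" and stop1: "\<gamma>1 t = y"
    and eq1: "\<forall>r\<in>{0..t}. \<gamma>1 r = x + integral {0..r} F1"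
    using A1 unfolding admissible_iff F1_def by blast+
  have u2I: "u2 absolutely_integrable_on {0..s}"
    and F2I: "F2 absolutely_integrable_on {0..s}"
    and L2I: "(\<lambda>r. L (\<gamma>2 r, u2 r)) absolutely_integrable_on {0..s}"
    and inM2: "\<forall>r\<in>{0..s}. \<gamma>2 r \<in> M" and start2: "\<gamma>2 0 = y" and stop2: "\<gamma>2 s = z"
    and eq2: "\<forall>r\<in>{0..s}. \<gamma>2 r = y + integral {0..r} F2"
    using A2 unfolding admissible_iff F2_def by blast+
  have inM: "\<forall>r\<in>{0..t+s}. glue t \<gamma>1 \<gamma>2 r \<in> M"
    using inM1 inM2 by (auto simp: glue_def)
  have endpoints: "glue t \<gamma>1 \<gamma>2 0 = x" "glue t \<gamma>1 \<gamma>2 (t+s) = z"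
    using start1 stop1 start2 stop2 t s by (auto simp: glue_def)
  have eq: "\<forall>r\<in>{0..t+s}. glue t \<gamma>1 \<gamma>2 r = x + integral {0..r} (glue t F1 F2)"
    using glue_integral_equation[OF F1I F2I t eq1] eq2 stop1 by blast
  show "admissible M X0 X L (t+s) x z (glue t \<gamma>1 \<gamma>2) (glue t u1 u2)"
    unfolding admissible_iff velocity_glue F1_def[symmetric] F2_def[symmetric] cost_glue
    using glue_integral(1)[OF u1I u2I t s] glue_integral(1)[OF F1I F2I t s]
      glue_integral(1)[OF L1I L2I t s] inM endpoints eq by blast
  show "integral {0..t+s} (\<lambda>r. L (glue t \<gamma>1 \<gamma>2 r, glue t u1 u2 r))
         = integral {0..t} (\<lambda>r. L (\<gamma>1 r, u1 r)) + integral {0..s} (\<lambda>r. L (\<gamma>2 r, u2 r))"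
    unfolding cost_glue by (rule glue_integral(2)[OF L1I L2I t s])
qed

section \<open>The dynamic programming principle for the optimal cost\<close>

lemma ctrl_cost_le:
  assumes A: "admissible M X0 X L t x y \<gamma> u" and fin: "\<bar>ctrl_cost M X0 X L t x y\<bar> \<noteq> \<infinity>"
  shows "real_of_ereal (ctrl_cost M X0 X L t x y) \<le> integral {0..t} (\<lambda>s. L (\<gamma> s, u s))"
proof -
  have "ctrl_cost M X0 X L t x y \<le> ereal (integral {0..t} (\<lambda>s. L (fst (\<gamma>, u) s, snd (\<gamma>, u) s)))"
    unfolding ctrl_cost_def by (rule INF_lower) (use A in simp)
  then show ?thesis
    using fin by (cases "ctrl_cost M X0 X L t x y") auto
qed

lemma ctrl_cost_approx:
  assumes fin: "\<bar>ctrl_cost M X0 X L t x y\<bar> \<noteq> \<infinity>" and e: "e > 0"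
  obtains \<gamma> u where "admissible M X0 X L t x y \<gamma> u"
    and "integral {0..t} (\<lambda>s. L (\<gamma> s, u s)) < real_of_ereal (ctrl_cost M X0 X L t x y) + e"
proof -
  have "ctrl_cost M X0 X L t x y < ereal (real_of_ereal (ctrl_cost M X0 X L t x y) + e)"
    using fin e by (cases "ctrl_cost M X0 X L t x y") auto
  then obtain p where "p \<in> {(\<gamma>, u). admissible M X0 X L t x y \<gamma> u}"
    and "ereal (integral {0..t} (\<lambda>s. L (fst p s, snd p s)))
           < ereal (real_of_ereal (ctrl_cost M X0 X L t x y) + e)"
    unfolding ctrl_cost_def INF_less_iff by blast
  with that show ?thesis
    by (cases p) auto
qed

text \<open>Triangle inequality: c_{t+s}(x,z) <= c_t(x,y) + c_s(y,z), by gluing near-optimal pairs.\<close>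
lemma ctrl_cost_triangle:
  assumes fin1: "\<bar>ctrl_cost M X0 X L t x y\<bar> \<noteq> \<infinity>" and fin2: "\<bar>ctrl_cost M X0 X L s y z\<bar> \<noteq> \<infinity>"
    and fin: "\<bar>ctrl_cost M X0 X L (t+s) x z\<bar> \<noteq> \<infinity>" and t: "0 \<le> t" and s: "0 \<le> s"
  shows "real_of_ereal (ctrl_cost M X0 X L (t+s) x z)
      \<le> real_of_ereal (ctrl_cost M X0 X L t x y) + real_of_ereal (ctrl_cost M X0 X L s y z)"
proof (rule field_le_epsilon)
  fix e :: real
  assume e: "e > 0"
  obtain \<gamma>1 u1 where A1: "admissible M X0 X L t x y \<gamma>1 u1"
    and c1: "integral {0..t} (\<lambda>r. L (\<gamma>1 r, u1 r)) < real_of_ereal (ctrl_cost M X0 X L t x y) + e/2"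
    using ctrl_cost_approx[OF fin1, of "e/2"] e by auto
  obtain \<gamma>2 u2 where A2: "admissible M X0 X L s y z \<gamma>2 u2"
    and c2: "integral {0..s} (\<lambda>r. L (\<gamma>2 r, u2 r)) < real_of_ereal (ctrl_cost M X0 X L s y z) + e/2"
    using ctrl_cost_approx[OF fin2, of "e/2"] e by auto
  note glued = admissible_glue[OF A1 A2 t s]
  from ctrl_cost_le[OF glued(1) fin] glued(2) c1 c2
  show "real_of_ereal (ctrl_cost M X0 X L (t+s) x z)
      \<le> real_of_ereal (ctrl_cost M X0 X L t x y) + real_of_ereal (ctrl_cost M X0 X L s y z) + e"
    by linarith
qed

text \<open>Approximate converse: cutting a near-optimal pair at time t yields an intermediate
  point y in M with c_t(x,y) + c_s(y,z) <= c_{t+s}(x,z) + e.\<close>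
lemma ctrl_cost_split:
  assumes fin: "\<And>t x y. t > 0 \<Longrightarrow> x \<in> M \<Longrightarrow> y \<in> M \<Longrightarrow> \<bar>ctrl_cost M X0 X L t x y\<bar> \<noteq> \<infinity>"
    and t: "t > 0" and s: "s > 0" and xz: "x \<in> M" "z \<in> M" and e: "e > 0"
  shows "\<exists>y\<in>M. real_of_ereal (ctrl_cost M X0 X L t x y) + real_of_ereal (ctrl_cost M X0 X L s y z)
      \<le> real_of_ereal (ctrl_cost M X0 X L (t+s) x z) + e"
proof -
  obtain \<gamma> u where A: "admissible M X0 X L (t+s) x z \<gamma> u"
    and c: "integral {0..t+s} (\<lambda>r. L (\<gamma> r, u r)) < real_of_ereal (ctrl_cost M X0 X L (t+s) x z) + e"
    using ctrl_cost_approx[OF fin[of "t+s" x z] e] t s xz by auto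
  note pieces = admissible_split[OF A less_imp_le[OF t] less_imp_le[OF s]]
  have "\<forall>r\<in>{0..t+s}. \<gamma> r \<in> M"
    using A unfolding admissible_iff by blast
  then have yM: "\<gamma> t \<in> M"
    using t s by auto
  have "real_of_ereal (ctrl_cost M X0 X L t x (\<gamma> t)) \<le> integral {0..t} (\<lambda>r. L (\<gamma> r, u r))"
    using ctrl_cost_le[OF pieces(1) fin[OF t xz(1) yM]] t s by simp
  moreover have "real_of_ereal (ctrl_cost M X0 X L s (\<gamma> t) z)
      \<le> integral {0..s} (\<lambda>r. L (\<gamma> (r + t), u (r + t)))"
    using ctrl_cost_le[OF pieces(2) fin[OF s yM xz(2)]] t s by simp
  ultimately have "real_of_ereal (ctrl_cost M X0 X L t x (\<gamma> t))
      + real_of_ereal (ctrl_cost M X0 X L s (\<gamma> t) z) \<le> real_of_ereal (ctrl_cost M X0 X L (t+s) x z) + e"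
    using pieces(3) c by linarith
  with yM show ?thesis
    by blast
qed

section \<open>A Fekete-type lemma for almost additive functions\<close>

context
  fixes m :: "real \<Rightarrow> real" and D :: real
  assumes superadditive: "\<And>t s. t > 0 \<Longrightarrow> s > 0 \<Longrightarrow> m t + m s \<le> m (t + s)"
    and quasi_subadditive: "\<And>t s. t > 0 \<Longrightarrow> s \<ge> 1 \<Longrightarrow> m (t + s) \<le> m t + m s + D"
    and bounded_above: "\<And>a b. 0 < a \<Longrightarrow> \<exists>B. \<forall>t\<in>{a..b}. m t \<le> B"
begin

lemma superadditive_multiple:
  assumes "n \<ge> 1" and T: "T > 0"
  shows "real n * m T \<le> m (real n * T)"
  using assms(1)
proof (induction n rule: dec_induct)
  case (step n)
  have "real (Suc n) * m T = real n * m T + m T"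
    by (simp add: algebra_simps)
  also have "\<dots> \<le> m (real n * T) + m T"
    using step by simp
  also have "\<dots> \<le> m (real n * T + T)"
    using superadditive[of "real n * T" T] step(1) T by simp
  finally show ?case
    by (simp add: algebra_simps)
qed simp

lemma quasi_subadditive_multiple:
  assumes "k \<ge> 1" and t: "t \<ge> 1"
  shows "m (real k * t) + D \<le> real k * (m t + D)"
  using assms(1)
proof (induction k rule: dec_induct)
  case (step k)
  have "m (real k * t + t) \<le> m (real k * t) + m t + D"
    using quasi_subadditive[of "real k * t" t] step(1) t by simp
  then show ?case
    using step by (simp add: algebra_simps)
qed simp

text \<open>Writing n T = k t + r with r in [t, 2t] and combining the two multiple estimates:
  n m(T) grows at most like n T (m t + D) / t.\<close>
lemma multiple_upper_bound:
  assumes T: "T > 0" and t: "t \<ge> 1"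
  shows "\<exists>B. \<forall>n. real n * T \<ge> 2 * t \<longrightarrow> real n * m T \<le> real n * T * (m t + D) / t + B"
proof -
  define f where "f = m t + D"
  obtain Bt where Bt: "\<forall>r\<in>{t..2*t}. m r \<le> Bt"
    using bounded_above[of t "2*t"] t by auto
  have "real n * m T \<le> real n * T * f / t + (2 * \<bar>f\<bar> + Bt)" if n: "real n * T \<ge> 2 * t" for n
  proof -
    have n1: "n \<ge> 1"
      using n t T by (cases n) auto
    define q where "q = real n * T / t - 1"
    have q1: "q \<ge> 1"
      using n t unfolding q_def by (simp add: field_simps)
    define k where "k = nat \<lfloor>q\<rfloor>"
    have kq: "real k \<le> q" "q < real k + 1" and k1: "k \<ge> 1"
      using q1 unfolding k_def by linarith+
    define r where "r = real n * T - real k * t"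
    have qt: "q * t = real n * T - t"
      using t unfolding q_def by (simp add: field_simps)
    have "real k * t \<le> q * t" "q * t < (real k + 1) * t"
      using kq t by (simp_all add: mult_right_mono mult_strict_right_mono)
    then have r: "t \<le> r" "r \<le> 2 * t"
      using qt unfolding r_def by (auto simp: algebra_simps)
    have "real n * m T \<le> m (real k * t + r)"
      using superadditive_multiple[OF n1 T] unfolding r_def by simp
    also have "\<dots> \<le> m (real k * t) + m r + D"
      using quasi_subadditive[of "real k * t" r] k1 t r by simp
    also have "\<dots> \<le> real k * f + Bt"
      using quasi_subadditive_multiple[OF k1 t] Bt r unfolding f_def by force
    also have "real k * f \<le> real n * T * f / t + 2 * \<bar>f\<bar>"
    proof -
      have "\<bar>real k - real n * T / t\<bar> \<le> 2"
        using kq unfolding q_def by linarith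
      then have "(real k - real n * T / t) * f \<le> 2 * \<bar>f\<bar>"
        by (metis abs_ge_self abs_mult dual_order.trans mult_right_mono abs_ge_zero)
      then show ?thesis
        by (simp add: algebra_simps)
    qed
    finally show ?thesis
      by simp
  qed
  then show ?thesis
    unfolding f_def by blast
qed

lemma average_comparison:
  assumes T: "T > 0" and t: "t \<ge> 1"
  shows "m T * t \<le> (m t + D) * T"
proof (rule ccontr)
  assume exceeds: "\<not> ?thesis"
  define \<eta> where "\<eta> = m T - T * (m t + D) / t"
  have \<eta>: "\<eta> > 0"
    using exceeds t unfolding \<eta>_def by (simp add: field_simps)
  obtain B where B: "\<And>n. real n * T \<ge> 2 * t \<Longrightarrow> real n * m T \<le> real n * T * (m t + D) / t + B"
    using multiple_upper_bound[OF T t] by blast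
  define n where "n = nat \<lceil>max (2 * t / T) (B / \<eta>)\<rceil> + 1"
  have "real n \<ge> 2 * t / T" "real n > B / \<eta>"
    unfolding n_def by linarith+
  then have "real n * T \<ge> 2 * t" "real n * \<eta> > B"
    using T \<eta> by (simp_all add: field_simps)
  with B[of n] show False
    unfolding \<eta>_def by (simp add: algebra_simps)
qed

text \<open>The rate h = sup of m T / T over T >= 1 satisfies m t <= h t <= m t + D.\<close>
lemma linear_rate: "\<exists>h. \<forall>t\<ge>1. m t \<le> h * t \<and> h * t \<le> m t + D"
proof -
  define S where "S = {m T / T | T. T \<ge> 1}"
  have S_nonempty: "S \<noteq> {}"
    unfolding S_def by auto
  have S_bounded: "bdd_above S"
    using average_comparison[of _ 1] unfolding S_def bdd_above_def
    by (auto simp: field_simps intro!: exI[of _ "m 1 + D"])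
  have "m t \<le> Sup S * t \<and> Sup S * t \<le> m t + D" if t: "t \<ge> 1" for t
  proof
    have "m t / t \<le> Sup S"
      by (rule cSup_upper[OF _ S_bounded]) (use t in \<open>auto simp: S_def\<close>)
    then show "m t \<le> Sup S * t"
      using t by (simp add: field_simps)
    have "Sup S \<le> (m t + D) / t"
    proof (rule cSup_least[OF S_nonempty])
      fix x assume "x \<in> S"
      then obtain T where T: "T \<ge> 1" and x: "x = m T / T"
        unfolding S_def by auto
      show "x \<le> (m t + D) / t"
        using average_comparison[of T t] t T unfolding x by (simp add: field_simps)
    qed
    then show "Sup S * t \<le> m t + D"
      using t by (simp add: field_simps)
  qed
  then show ?thesis
    by blast
qed

end

section \<open>Continuous costs obeying the dynamic programming principle\<close>

locale cost_semigroup =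
  fixes M :: "'a::metric_space set" and C :: "real \<Rightarrow> 'a \<Rightarrow> 'a \<Rightarrow> real"
  assumes compact_M: "compact M"
    and continuous_C: "continuous_on ({0<..} \<times> M \<times> M) (\<lambda>(t, x, y). C t x y)"
    and triangle: "\<And>t s x y z. t > 0 \<Longrightarrow> s > 0 \<Longrightarrow> x \<in> M \<Longrightarrow> y \<in> M \<Longrightarrow> z \<in> M \<Longrightarrow>
        C (t + s) x z \<le> C t x y + C s y z"
    and near_split: "\<And>t s x z e. t > 0 \<Longrightarrow> s > 0 \<Longrightarrow> x \<in> M \<Longrightarrow> z \<in> M \<Longrightarrow> e > 0 \<Longrightarrow>
        \<exists>y\<in>M. C t x y + C s y z \<le> C (t + s) x z + e"
begin

lemma continuous_at_time:
  assumes b: "b > 0"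
  shows "continuous_on (M \<times> M) (\<lambda>p. C b (fst p) (snd p))"
proof -
  have "continuous_on (M \<times> M) ((\<lambda>(t, x, y). C t x y) \<circ> (\<lambda>p. (b, fst p, snd p)))"
    by (rule continuous_on_compose, intro continuous_intros,
        rule continuous_on_subset[OF continuous_C]) (use b in auto)
  then show ?thesis
    by (simp add: o_def split_def)
qed

lemma bounded_on_strip:
  assumes a: "a > 0"
  shows "\<exists>B. \<forall>t\<in>{a..b}. \<forall>x\<in>M. \<forall>y\<in>M. \<bar>C t x y\<bar> \<le> B"
proof -
  have "compact ((\<lambda>(t, x, y). C t x y) ` ({a..b} \<times> M \<times> M))"
    by (rule compact_continuous_image[OF continuous_on_subset[OF continuous_C]])
      (use a in \<open>auto simp: compact_Times compact_M\<close>)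
  then have "bounded ((\<lambda>(t, x, y). C t x y) ` ({a..b} \<times> M \<times> M))"
    by (rule compact_imp_bounded)
  then obtain B where "\<And>v. v \<in> (\<lambda>(t, x, y). C t x y) ` ({a..b} \<times> M \<times> M) \<Longrightarrow> norm v \<le> B"
    unfolding bounded_iff by blast
  then have "\<bar>C t x y\<bar> \<le> B" if "t \<in> {a..b}" "x \<in> M" "y \<in> M" for t x y
    using that by force
  then show ?thesis
    by blast
qed

text \<open>Split an almost optimal splitting of
  C t x y at times b and t - b, and reuse the intermediate points for x', y'.\<close>
lemma oscillation_transfer:
  assumes b: "b > 0" and t: "t > 2 * b"
    and pts: "x \<in> M" "y \<in> M" "x' \<in> M" "y' \<in> M" and e: "e > 0"
  shows "\<exists>z\<in>M. \<exists>w\<in>M. C t x' y' - C t x y \<le> (C b x' z - C b x z) + (C b w y' - C b w y) + e"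
proof -
  have tb: "t - b > 0" and t2b: "t - 2 * b > 0"
    using b t by auto
  obtain z where z: "z \<in> M" and hz: "C b x z + C (t - b) z y \<le> C (b + (t - b)) x y + e/2"
    using near_split[OF b tb pts(1,2), of "e/2"] e by auto
  obtain w where w: "w \<in> M" and hw: "C (t - 2*b) z w + C b w y \<le> C ((t - 2*b) + b) z y + e/2"
    using near_split[OF t2b b z pts(2), of "e/2"] e by auto
  have "C (b + (t - b)) x' y' \<le> C b x' z + C (t - b) z y'"
    by (rule triangle[OF b tb pts(3) z pts(4)])
  moreover have "C ((t - 2*b) + b) z y' \<le> C (t - 2*b) z w + C b w y'"
    by (rule triangle[OF t2b b z w pts(4)])
  ultimately show ?thesis
    using hz hw z w by (intro bexI[of _ z] bexI[of _ w]) auto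
qed

text \<open>First claim: for a > 0 the family C t, t >= a, is equicontinuous on M x M, since every
  C t is as regular as the uniformly continuous C (a/3).\<close>
theorem equicontinuous:
  "\<forall>a>0. \<forall>p\<in>M \<times> M. \<forall>\<epsilon>>0. \<exists>\<delta>>0. \<forall>t\<ge>a. \<forall>q\<in>M \<times> M.
     dist q p < \<delta> \<longrightarrow> \<bar>C t (fst q) (snd q) - C t (fst p) (snd p)\<bar> < \<epsilon>"
proof (intro allI impI ballI)
  fix a \<epsilon> :: real and p :: "'a \<times> 'a"
  assume a: "a > 0" and p: "p \<in> M \<times> M" and \<epsilon>: "\<epsilon> > 0"
  define b where "b = a / 3"
  have b: "b > 0"
    using a by (simp add: b_def)
  have "uniformly_continuous_on (M \<times> M) (\<lambda>p. C b (fst p) (snd p))"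
    by (rule compact_uniformly_continuous[OF continuous_at_time[OF b]])
      (simp add: compact_Times compact_M)
  then obtain d where d: "d > 0" and close: "\<And>q q'. q \<in> M \<times> M \<Longrightarrow> q' \<in> M \<times> M \<Longrightarrow>
      dist q' q < d \<Longrightarrow> \<bar>C b (fst q') (snd q') - C b (fst q) (snd q)\<bar> < \<epsilon>/3"
    unfolding uniformly_continuous_on_def dist_real_def using \<epsilon> by (metis divide_pos_pos zero_less_numeral)
  have bound: "C t x' y' - C t x y < \<epsilon>"
    if t: "t \<ge> a" and pts: "x \<in> M" "y \<in> M" "x' \<in> M" "y' \<in> M"
      and dx: "dist x' x < d" and dy: "dist y' y < d" for t x y x' y'
  proof -
    have "t > 2 * b" "\<epsilon>/3 > 0"
      using t a \<epsilon> unfolding b_def by auto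
    then obtain z w where zw: "z \<in> M" "w \<in> M"
      and est: "C t x' y' - C t x y \<le> (C b x' z - C b x z) + (C b w y' - C b w y) + \<epsilon>/3"
      using oscillation_transfer[OF b _ pts] by blast
    have "\<bar>C b x' z - C b x z\<bar> < \<epsilon>/3"
      using close[of "(x, z)" "(x', z)"] dx pts zw by (simp add: dist_Pair_Pair)
    moreover have "\<bar>C b w y' - C b w y\<bar> < \<epsilon>/3"
      using close[of "(w, y)" "(w, y')"] dy pts zw by (simp add: dist_Pair_Pair)
    ultimately show ?thesis
      using est by linarith
  qed
  show "\<exists>\<delta>>0. \<forall>t\<ge>a. \<forall>q\<in>M \<times> M. dist q p < \<delta> \<longrightarrow> \<bar>C t (fst q) (snd q) - C t (fst p) (snd p)\<bar> < \<epsilon>"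
  proof (intro exI[of _ d] conjI allI impI ballI d)
    fix t q
    assume t: "a \<le> t" and q: "q \<in> M \<times> M" and dq: "dist q p < d"
    have "dist (fst q) (fst p) < d" "dist (snd q) (snd p) < d"
      using dist_fst_le[of q p] dist_snd_le[of q p] dq by linarith+
    then show "\<bar>C t (fst q) (snd q) - C t (fst p) (snd p)\<bar> < \<epsilon>"
      using bound[of t] t p q by (force simp: dist_commute abs_less_iff)
  qed
qed

lemma oscillation_bounded:
  "\<exists>D. \<forall>t\<ge>1. \<forall>x\<in>M. \<forall>y\<in>M. \<forall>x'\<in>M. \<forall>y'\<in>M. C t x' y' - C t x y \<le> D"
proof -
  define b :: real where "b = 1/3"
  obtain B where B: "\<forall>x\<in>M. \<forall>y\<in>M. \<bar>C b x y\<bar> \<le> B"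
    using bounded_on_strip[of b b] unfolding b_def by auto
  have "C t x' y' - C t x y \<le> 4 * B"
    if t: "t \<ge> 1" and pts: "x \<in> M" "y \<in> M" "x' \<in> M" "y' \<in> M" for t x y x' y'
  proof (rule field_le_epsilon)
    fix e :: real
    assume e: "e > 0"
    have "b > 0" "t > 2 * b"
      using t unfolding b_def by auto
    then obtain z w where zw: "z \<in> M" "w \<in> M"
      and est: "C t x' y' - C t x y \<le> (C b x' z - C b x z) + (C b w y' - C b w y) + e"
      using oscillation_transfer[OF _ _ pts e] by blast
    show "C t x' y' - C t x y \<le> 4 * B + e"
      using est B zw pts by (smt (verit, best))
  qed
  then show ?thesis
    by blast
qed

definition min_cost :: "real \<Rightarrow> real" where
  "min_cost t = Inf ((\<lambda>p. C t (fst p) (snd p)) ` (M \<times> M))"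

lemma min_cost_attained:
  assumes t: "t > 0" and nonempty: "M \<noteq> {}"
  shows "\<exists>x\<in>M. \<exists>y\<in>M. min_cost t = C t x y"
proof -
  have "compact (M \<times> M)" "M \<times> M \<noteq> {}"
    using compact_M nonempty by (auto simp: compact_Times)
  then obtain p where p: "p \<in> M \<times> M" and min: "\<forall>q\<in>M \<times> M. C t (fst p) (snd p) \<le> C t (fst q) (snd q)"
    using continuous_attains_inf[OF _ _ continuous_at_time[OF t]] by blast
  have "min_cost t = C t (fst p) (snd p)"
    unfolding min_cost_def by (rule cInf_eq_minimum) (use p min in auto)
  then show ?thesis
    using p by (auto simp: mem_Times_iff)
qed

lemma min_cost_le:
  assumes "t > 0" "x \<in> M" "y \<in> M"
  shows "min_cost t \<le> C t x y"
proof -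
  obtain B where B: "\<forall>x\<in>M. \<forall>y\<in>M. \<bar>C t x y\<bar> \<le> B"
    using bounded_on_strip[of t t] assms(1) by auto
  have "-B \<le> C t x y" if "x \<in> M" "y \<in> M" for x y
    using B that by (metis abs_le_D2 minus_le_iff)
  then have "bdd_below ((\<lambda>p. C t (fst p) (snd p)) ` (M \<times> M))"
    unfolding bdd_below_def by (intro exI[of _ "-B"]) auto
  then show ?thesis
    unfolding min_cost_def using assms by (force intro: cInf_lower)
qed

text \<open>The minimal cost is superadditive, by the approximate splitting of a minimiser.\<close>
lemma min_cost_superadditive:
  assumes t: "t > 0" and s: "s > 0" and nonempty: "M \<noteq> {}"
  shows "min_cost t + min_cost s \<le> min_cost (t + s)"
proof (rule field_le_epsilon)
  fix e :: real
  assume e: "e > 0"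
  obtain x z where xz: "x \<in> M" "z \<in> M" and min: "min_cost (t + s) = C (t + s) x z"
    using min_cost_attained[of "t + s"] t s nonempty by auto
  obtain y where y: "y \<in> M" and split: "C t x y + C s y z \<le> C (t + s) x z + e"
    using near_split[OF t s xz e] by blast
  show "min_cost t + min_cost s \<le> min_cost (t + s) + e"
    using min_cost_le[OF t xz(1) y] min_cost_le[OF s y xz(2)] split min by linarith
qed

text \<open>Conversely it is subadditive up to the oscillation bound D: close a minimiser of
  time t into a loop through a point of time s.\<close>
lemma min_cost_quasi_subadditive:
  assumes t: "t > 0" and s: "s \<ge> 1" and nonempty: "M \<noteq> {}"
    and D: "\<forall>t\<ge>1. \<forall>x\<in>M. \<forall>y\<in>M. \<forall>x'\<in>M. \<forall>y'\<in>M. C t x' y' - C t x y \<le> D"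
  shows "min_cost (t + s) \<le> min_cost t + min_cost s + D"
proof -
  obtain x y where xy: "x \<in> M" "y \<in> M" and min_t: "min_cost t = C t x y"
    using min_cost_attained[OF t nonempty] by blast
  obtain x' y' where xy': "x' \<in> M" "y' \<in> M" and min_s: "min_cost s = C s x' y'"
    using min_cost_attained[OF _ nonempty, of s] s by auto
  have "min_cost (t + s) \<le> C (t + s) x x"
    using min_cost_le[of "t + s" x x] t s xy by simp
  also have "\<dots> \<le> C t x y + C s y x"
    using triangle[OF t _ xy(1,2,1), of s] s by simp
  also have "C s y x \<le> C s x' y' + D"
    using D s xy xy' by force
  finally show ?thesis
    using min_t min_s by simp
qed

text \<open>Second claim: C t x y = h t + O(1) uniformly for t >= a.  By the Fekete-type lemma
  the minimal cost grows at a linear rate h, and C t stays within D of its minimum.\<close>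
theorem linear_growth:
  "\<exists>h::real. \<forall>a>0. \<exists>K::real. \<forall>t\<ge>a. \<forall>x\<in>M. \<forall>y\<in>M. \<bar>C t x y - h * t\<bar> \<le> K"
proof (cases "M = {}")
  case False
  then obtain x0 where x0: "x0 \<in> M"
    by auto
  obtain D where D: "\<forall>t\<ge>1. \<forall>x\<in>M. \<forall>y\<in>M. \<forall>x'\<in>M. \<forall>y'\<in>M. C t x' y' - C t x y \<le> D"
    using oscillation_bounded by blast
  have D_nonneg: "D \<ge> 0"
    using D x0 by force
  have "\<exists>B. \<forall>t\<in>{a..b}. min_cost t \<le> B" if a: "a > 0" for a b
  proof -
    obtain B where "\<forall>t\<in>{a..b}. \<forall>x\<in>M. \<forall>y\<in>M. \<bar>C t x y\<bar> \<le> B"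
      using bounded_on_strip[OF a] by blast
    then have "min_cost t \<le> B" if "t \<in> {a..b}" for t
      using min_cost_le[of t x0 x0] x0 a that by force
    then show ?thesis
      by blast
  qed
  then obtain h where h: "\<forall>t\<ge>1. min_cost t \<le> h * t \<and> h * t \<le> min_cost t + D"
    using linear_rate[of min_cost D] min_cost_superadditive min_cost_quasi_subadditive[OF _ _ False D]
      False by blast
  have near_min: "min_cost t \<le> C t x y \<and> C t x y \<le> min_cost t + D"
    if t: "t \<ge> 1" and "x \<in> M" "y \<in> M" for t x y
    using min_cost_le[of t x y] min_cost_attained[of t] D t that False by force
  show ?thesis
  proof (rule exI[of _ h], intro allI impI)
    fix a :: real
    assume a: "a > 0"
    obtain B where B: "\<forall>t\<in>{min a 1..1}. \<forall>x\<in>M. \<forall>y\<in>M. \<bar>C t x y\<bar> \<le> B"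
      using bounded_on_strip[of "min a 1" 1] a by auto
    have B_nonneg: "B \<ge> 0"
      using B x0 by (metis abs_ge_zero atLeastAtMost_iff min.cobounded2 order.trans order_refl)
    have "\<bar>C t x y - h * t\<bar> \<le> D + B + \<bar>h\<bar>" if t: "t \<ge> a" and xy: "x \<in> M" "y \<in> M" for t x y
    proof (cases "t \<ge> 1")
      case True
      then show ?thesis
        using near_min[OF True xy] h B_nonneg by (auto simp: abs_le_iff)
    next
      case False
      have "\<bar>h * t\<bar> \<le> \<bar>h\<bar>"
        using False t a by (simp add: abs_mult mult_left_le)
      then show ?thesis
        using B t False xy D_nonneg by force
    qed
    then show "\<exists>K. \<forall>t\<ge>a. \<forall>x\<in>M. \<forall>y\<in>M. \<bar>C t x y - h * t\<bar> \<le> K"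
      by blast
  qed
qed simp

end

theorem mainTheorem10:
  fixes M :: "'a::euclidean_space set"
    and X0 :: "'a \<Rightarrow> 'a" and X :: "'m::finite \<Rightarrow> 'a \<Rightarrow> 'a"
    and L :: "'a \<times> (real^'m) \<Rightarrow> real"
  defines "c \<equiv> ctrl_cost M X0 X L"
  assumes M: "smooth_submanifold M" "compact M"
    and X0: "smooth_vector_field_on M X0"
    and X: "\<And>i. smooth_vector_field_on M (X i)"
    and L: "C_inf_on UNIV L"
    and finite: "\<And>t x y. t > 0 \<Longrightarrow> x \<in> M \<Longrightarrow> y \<in> M \<Longrightarrow> \<bar>c t x y\<bar> \<noteq> \<infinity>"
    and cont: "continuous_on ({0<..} \<times> M \<times> M) (\<lambda>(t, x, y). real_of_ereal (c t x y))"
  shows "(\<forall>a>0. \<forall>p\<in>M \<times> M. \<forall>\<epsilon>>0. \<exists>\<delta>>0. \<forall>t\<ge>a. \<forall>q\<in>M \<times> M.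
            dist q p < \<delta> \<longrightarrow>
            \<bar>real_of_ereal (c t (fst q) (snd q)) - real_of_ereal (c t (fst p) (snd p))\<bar> < \<epsilon>)
       \<and> (\<exists>h::real. \<forall>a>0. \<exists>K::real. \<forall>t\<ge>a. \<forall>x\<in>M. \<forall>y\<in>M.
            \<bar>real_of_ereal (c t x y) - h * t\<bar> \<le> K)"
proof -
  interpret cost: cost_semigroup M "\<lambda>t x y. real_of_ereal (c t x y)"
  proof
    show "compact M" by (fact M(2))
    show "continuous_on ({0<..} \<times> M \<times> M) (\<lambda>(t, x, y). real_of_ereal (c t x y))" by (fact cont)
    show "real_of_ereal (c (t + s) x z) \<le> real_of_ereal (c t x y) + real_of_ereal (c s y z)"
      if "t > 0" "s > 0" "x \<in> M" "y \<in> M" "z \<in> M" for t s x y z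
      using ctrl_cost_triangle[of M X0 X L] finite[unfolded c_def] that unfolding c_def by simp
    show "\<exists>y\<in>M. real_of_ereal (c t x y) + real_of_ereal (c s y z) \<le> real_of_ereal (c (t + s) x z) + e"
      if "t > 0" "s > 0" "x \<in> M" "z \<in> M" "e > 0" for t s x z e
      using ctrl_cost_split[OF finite[unfolded c_def] that] unfolding c_def .
  qed
  show ?thesis
    using cost.equicontinuous cost.linear_growth by blast
qed

end
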